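(* Let $\Lambda$ be a ring, let $\operatorname{mod}\Lambda$ be the category of finite length right $\Lambda$-modules, and let $T,M\in\operatorname{mod}\Lambda$. If $\varepsilon\colon 0\to T'\to E\to M\to0$ and $\eta\colon 0\to T''\to F\to M\to0$ are universal $\operatorname{add}(T)$-extensions of $M$, then $E\cong F$ modulo $\operatorname{add}(T)$, i.e. $E$ and $F$ are isomorphic as objects of the quotient category $\operatorname{mod}\Lambda/\operatorname{add}(T)$.
   Context: $\operatorname{add}(T)$ is the full subcategory of direct sums of direct summands of $T$. An element $\varepsilon\in\operatorname{Ext}^1(M,T')$ with $T'\in\operatorname{add}(T)$ is a universal $\operatorname{add}(T)$-extension of $M$ if the map $\operatorname{Hom}(T',T)\to\operatorname{Ext}^1(M,T)$, $\phi\mapsto\phi\varepsilon$ (push-out along $\phi$), is surjective. The quotient category $\operatorname{mod}\Lambda/\operatorname{add}(T)$ has the same objects as $\operatorname{mod}\Lambda$ and morphisms modulo those factoring through an object of $\operatorname{add}(T)$. *)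

theory Defs
  imports "HOL-Algebra.Ring"
begin

record ('a, 'r) rmod =
  mcar  :: "'a set"
  madd  :: "'a \<Rightarrow> 'a \<Rightarrow> 'a"
  mzero :: 'a
  mneg  :: "'a \<Rightarrow> 'a"
  mact  :: "'a \<Rightarrow> 'r \<Rightarrow> 'a"

definition rmodule :: "'r ring \<Rightarrow> ('a, 'r) rmod \<Rightarrow> bool" where
  "rmodule R M \<longleftrightarrow> ring R \<and>
     mzero M \<in> mcar M \<and>
     (\<forall>x\<in>mcar M. \<forall>y\<in>mcar M. madd M x y \<in> mcar M) \<and>
     (\<forall>x\<in>mcar M. mneg M x \<in> mcar M) \<and>
     (\<forall>x\<in>mcar M. \<forall>y\<in>mcar M. \<forall>z\<in>mcar M. madd M (madd M x y) z = madd M x (madd M y z)) \<and>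
     (\<forall>x\<in>mcar M. \<forall>y\<in>mcar M. madd M x y = madd M y x) \<and>
     (\<forall>x\<in>mcar M. madd M x (mzero M) = x) \<and>
     (\<forall>x\<in>mcar M. madd M x (mneg M x) = mzero M) \<and>
     (\<forall>x\<in>mcar M. \<forall>r\<in>carrier R. mact M x r \<in> mcar M) \<and>
     (\<forall>x\<in>mcar M. \<forall>y\<in>mcar M. \<forall>r\<in>carrier R.
        mact M (madd M x y) r = madd M (mact M x r) (mact M y r)) \<and>
     (\<forall>x\<in>mcar M. \<forall>r\<in>carrier R. \<forall>s\<in>carrier R.
        mact M x (r \<oplus>\<^bsub>R\<^esub> s) = madd M (mact M x r) (mact M x s)) \<and>
     (\<forall>x\<in>mcar M. \<forall>r\<in>carrier R. \<forall>s\<in>carrier R.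
        mact M x (r \<otimes>\<^bsub>R\<^esub> s) = mact M (mact M x r) s) \<and>
     (\<forall>x\<in>mcar M. mact M x \<one>\<^bsub>R\<^esub> = x)"

definition rhom :: "'r ring \<Rightarrow> ('a, 'r) rmod \<Rightarrow> ('b, 'r) rmod \<Rightarrow> ('a \<Rightarrow> 'b) \<Rightarrow> bool" where
  "rhom R M N f \<longleftrightarrow>
     (\<forall>x\<in>mcar M. f x \<in> mcar N) \<and>
     (\<forall>x\<in>mcar M. \<forall>y\<in>mcar M. f (madd M x y) = madd N (f x) (f y)) \<and>
     (\<forall>x\<in>mcar M. \<forall>r\<in>carrier R. f (mact M x r) = mact N (f x) r)"

definition riso :: "'r ring \<Rightarrow> ('a, 'r) rmod \<Rightarrow> ('b, 'r) rmod \<Rightarrow> bool" where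
  "riso R M N \<longleftrightarrow> (\<exists>f g. rhom R M N f \<and> rhom R N M g \<and>
      (\<forall>x\<in>mcar M. g (f x) = x) \<and> (\<forall>y\<in>mcar N. f (g y) = y))"

definition submod :: "'r ring \<Rightarrow> ('a, 'r) rmod \<Rightarrow> 'a set \<Rightarrow> bool" where
  "submod R M S \<longleftrightarrow> S \<subseteq> mcar M \<and> mzero M \<in> S \<and>
     (\<forall>x\<in>S. \<forall>y\<in>S. madd M x y \<in> S) \<and> (\<forall>x\<in>S. mneg M x \<in> S) \<and>
     (\<forall>x\<in>S. \<forall>r\<in>carrier R. mact M x r \<in> S)"

definition finite_length :: "'r ring \<Rightarrow> ('a, 'r) rmod \<Rightarrow> bool" where
  "finite_length R M \<longleftrightarrow> rmodule R M \<and>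
     (\<exists>n C. C 0 = {mzero M} \<and> C n = mcar M \<and> (\<forall>i\<le>n. submod R M (C i)) \<and>
        (\<forall>i<n. C i \<subset> C (Suc i) \<and>
           \<not> (\<exists>S. submod R M S \<and> C i \<subset> S \<and> S \<subset> C (Suc i))))"

definition summand :: "'r ring \<Rightarrow> ('a, 'r) rmod \<Rightarrow> 'a set \<Rightarrow> bool" where
  "summand R M S \<longleftrightarrow> submod R M S \<and>
     (\<exists>C. submod R M C \<and> S \<inter> C = {mzero M} \<and>
        (\<forall>x\<in>mcar M. \<exists>s\<in>S. \<exists>c\<in>C. x = madd M s c))"

text \<open>The external direct sum S_0 \<oplus> ... \<oplus> S_(k-1) of submodules S_i of T,
  realised on functions nat \<Rightarrow> 't (components \<ge> k are zero).\<close>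
definition dsum :: "('t, 'r) rmod \<Rightarrow> nat \<Rightarrow> (nat \<Rightarrow> 't set) \<Rightarrow> (nat \<Rightarrow> 't, 'r) rmod" where
  "dsum T k S = \<lparr> mcar = {x. (\<forall>i<k. x i \<in> S i) \<and> (\<forall>i\<ge>k. x i = mzero T)},
     madd = (\<lambda>x y i. if i < k then madd T (x i) (y i) else mzero T),
     mzero = (\<lambda>i. mzero T),
     mneg = (\<lambda>x i. if i < k then mneg T (x i) else mzero T),
     mact = (\<lambda>x r i. if i < k then mact T (x i) r else mzero T) \<rparr>"

definition is_add_model :: "'r ring \<Rightarrow> ('t, 'r) rmod \<Rightarrow> (nat \<Rightarrow> 't, 'r) rmod \<Rightarrow> bool" where
  "is_add_model R T X \<longleftrightarrow> (\<exists>k S. (\<forall>i<k. summand R T (S i)) \<and> X = dsum T k S)"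

text \<open>X \<in> add(T): X is isomorphic to a direct sum of direct summands of T.\<close>
definition in_add :: "'r ring \<Rightarrow> ('t, 'r) rmod \<Rightarrow> ('a, 'r) rmod \<Rightarrow> bool" where
  "in_add R T X \<longleftrightarrow> (\<exists>Y. is_add_model R T Y \<and> riso R X Y)"

definition factors_add :: "'r ring \<Rightarrow> ('t, 'r) rmod \<Rightarrow> ('a, 'r) rmod \<Rightarrow> ('b, 'r) rmod
    \<Rightarrow> ('a \<Rightarrow> 'b) \<Rightarrow> bool" where
  "factors_add R T M N f \<longleftrightarrow> (\<exists>Y h g. is_add_model R T Y \<and> rhom R M Y h \<and> rhom R Y N g \<and>
      (\<forall>x\<in>mcar M. f x = g (h x)))"

text \<open>Isomorphism in the quotient category mod R / add(T).\<close>
definition iso_mod_add :: "'r ring \<Rightarrow> ('t, 'r) rmod \<Rightarrow> ('a, 'r) rmod \<Rightarrow> ('b, 'r) rmod \<Rightarrow> bool" where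
  "iso_mod_add R T E F \<longleftrightarrow> (\<exists>f g. rhom R E F f \<and> rhom R F E g \<and>
      factors_add R T E E (\<lambda>x. madd E (g (f x)) (mneg E x)) \<and>
      factors_add R T F F (\<lambda>y. madd F (f (g y)) (mneg F y)))"

definition ses :: "'r ring \<Rightarrow> ('a, 'r) rmod \<Rightarrow> ('x, 'r) rmod \<Rightarrow> ('b, 'r) rmod
    \<Rightarrow> ('a \<Rightarrow> 'x) \<Rightarrow> ('x \<Rightarrow> 'b) \<Rightarrow> bool" where
  "ses R A X B i p \<longleftrightarrow> rhom R A X i \<and> rhom R X B p \<and> inj_on i (mcar A) \<and>
     p ` mcar X = mcar B \<and> {x \<in> mcar X. p x = mzero B} = i ` mcar A"

text \<open>Universal add(T)-extension of M: a short exact sequence eps = (0 \<rightarrow> T' \<rightarrow> E \<rightarrow> M \<rightarrow> 0)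
  in mod R with T' \<in> add(T) such that every class xi \<in> Ext^1(M,T) is a push-out phi eps
  with phi : T' \<rightarrow> T. Elements of Ext^1(M,T) are represented by extensions
  0 \<rightarrow> T \<rightarrow> X \<rightarrow> M \<rightarrow> 0 whose middle term lives on the type 't \<times> 'm (every extension
  is equivalent to such one), and xi = phi eps holds iff there is a morphism of
  extensions (phi, g, id_M) from eps to xi.\<close>
definition universal_add_ext :: "'r ring \<Rightarrow> ('t, 'r) rmod \<Rightarrow> ('m, 'r) rmod \<Rightarrow> ('a, 'r) rmod
    \<Rightarrow> ('e, 'r) rmod \<Rightarrow> ('a \<Rightarrow> 'e) \<Rightarrow> ('e \<Rightarrow> 'm) \<Rightarrow> bool" where
  "universal_add_ext R T M T' E i p \<longleftrightarrow>
     in_add R T T' \<and> ses R T' E M i p \<and>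
     (\<forall>(X :: ('t \<times> 'm, 'r) rmod) j q. finite_length R X \<and> ses R T X M j q \<longrightarrow>
        (\<exists>\<phi> g. rhom R T' T \<phi> \<and> rhom R E X g \<and>
           (\<forall>t\<in>mcar T'. g (i t) = j (\<phi> t)) \<and> (\<forall>e\<in>mcar E. q (g e) = p e)))"

end

theory Submission
  imports Defs
begin

text \<open>Both extensions admit morphisms over M in each direction, f : E \<rightarrow> F and g : F \<rightarrow> E;
  then g \<circ> f - id is killed by p, hence factors through T' (T1 below), which lies in add(T), and likewise
  for f \<circ> g - id. To construct f, pull \<eta> back along p: the fibre product P = E \<times>_M F
  contains T'' (T2 below) via b \<mapsto> (0, j b), and a retraction P \<rightarrow> T'' yields f. Since T'' \<in> add(T),
  such a retraction exists as soon as every map \<pi> : T'' \<rightarrow> T extends to P. This is where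
  universality of \<epsilon> enters: the push-out of \<eta> along \<pi> is an extension of M by T, so it
  receives a map from E over M, and the difference of that map and the push-out map F \<rightarrow> X,
  taken on P, lands in T and extends \<pi>.\<close>

section \<open>Right modules and their homomorphisms\<close>

locale right_module =
  fixes R :: "'r ring" and M :: "('a, 'r) rmod"
  assumes rmodule: "rmodule R M"
begin

lemma ring: "ring R"
  using rmodule unfolding rmodule_def by auto

lemma zero_closed [simp]: "mzero M \<in> mcar M"
  and add_closed [simp]: "x \<in> mcar M \<Longrightarrow> y \<in> mcar M \<Longrightarrow> madd M x y \<in> mcar M"
  and neg_closed [simp]: "x \<in> mcar M \<Longrightarrow> mneg M x \<in> mcar M"
  and act_closed [simp]: "x \<in> mcar M \<Longrightarrow> r \<in> carrier R \<Longrightarrow> mact M x r \<in> mcar M"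
  and add_assoc: "x \<in> mcar M \<Longrightarrow> y \<in> mcar M \<Longrightarrow> z \<in> mcar M \<Longrightarrow>
    madd M (madd M x y) z = madd M x (madd M y z)"
  and add_comm: "x \<in> mcar M \<Longrightarrow> y \<in> mcar M \<Longrightarrow> madd M x y = madd M y x"
  and add_zero [simp]: "x \<in> mcar M \<Longrightarrow> madd M x (mzero M) = x"
  and add_neg [simp]: "x \<in> mcar M \<Longrightarrow> madd M x (mneg M x) = mzero M"
  and act_add: "x \<in> mcar M \<Longrightarrow> y \<in> mcar M \<Longrightarrow> r \<in> carrier R \<Longrightarrow>
    mact M (madd M x y) r = madd M (mact M x r) (mact M y r)"
  and act_radd: "x \<in> mcar M \<Longrightarrow> r \<in> carrier R \<Longrightarrow> s \<in> carrier R \<Longrightarrow>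
    mact M x (r \<oplus>\<^bsub>R\<^esub> s) = madd M (mact M x r) (mact M x s)"
  and act_mult: "x \<in> mcar M \<Longrightarrow> r \<in> carrier R \<Longrightarrow> s \<in> carrier R \<Longrightarrow>
    mact M x (r \<otimes>\<^bsub>R\<^esub> s) = mact M (mact M x r) s"
  and act_one: "x \<in> mcar M \<Longrightarrow> mact M x \<one>\<^bsub>R\<^esub> = x"
  using rmodule unfolding rmodule_def by auto

lemma add_left_comm: "x \<in> mcar M \<Longrightarrow> y \<in> mcar M \<Longrightarrow> z \<in> mcar M \<Longrightarrow>
    madd M x (madd M y z) = madd M y (madd M x z)"
  by (metis add_assoc add_comm)

lemmas add_ac = add_assoc add_comm add_left_comm

lemma zero_add [simp]: "x \<in> mcar M \<Longrightarrow> madd M (mzero M) x = x"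
  by (simp add: add_comm)

lemma neg_add [simp]: "x \<in> mcar M \<Longrightarrow> madd M (mneg M x) x = mzero M"
  by (simp add: add_comm)

lemma add_neg_cancel_left [simp]:
  "x \<in> mcar M \<Longrightarrow> y \<in> mcar M \<Longrightarrow> madd M x (madd M (mneg M x) y) = y"
  by (metis add_assoc add_neg neg_closed zero_add)

lemma neg_add_cancel_left [simp]:
  "x \<in> mcar M \<Longrightarrow> y \<in> mcar M \<Longrightarrow> madd M (mneg M x) (madd M x y) = y"
  by (metis add_assoc neg_add neg_closed zero_add)

lemma add_left_cancel [simp]: "x \<in> mcar M \<Longrightarrow> y \<in> mcar M \<Longrightarrow> z \<in> mcar M \<Longrightarrow>
    madd M x y = madd M x z \<longleftrightarrow> y = z"
  by (metis neg_add_cancel_left)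

text \<open>AC-normalisation need not place x next to its negative, so add_ac is complemented by
  cancellation across up to two intermediate summands.\<close>

lemma add_neg_cancel_ac [simp]:
  assumes "x \<in> mcar M" "a \<in> mcar M" "b \<in> mcar M" "c \<in> mcar M"
  shows "madd M x (madd M a (mneg M x)) = a"
    and "madd M (mneg M x) (madd M a x) = a"
    and "madd M x (madd M a (madd M b (mneg M x))) = madd M a b"
    and "madd M (mneg M x) (madd M a (madd M b x)) = madd M a b"
    and "madd M x (madd M a (madd M (mneg M x) b)) = madd M a b"
    and "madd M (mneg M x) (madd M a (madd M x b)) = madd M a b"
    and "madd M x (madd M a (madd M b (madd M c (mneg M x)))) = madd M a (madd M b c)"
    and "madd M (mneg M x) (madd M a (madd M b (madd M c x))) = madd M a (madd M b c)"
  using assms by (simp_all add: add_left_comm[of x] add_left_comm[of "mneg M x"])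

lemma neg_unique: "x \<in> mcar M \<Longrightarrow> y \<in> mcar M \<Longrightarrow> madd M x y = mzero M \<Longrightarrow> y = mneg M x"
  by (metis add_neg add_left_cancel neg_closed)

lemma neg_neg [simp]: "x \<in> mcar M \<Longrightarrow> mneg M (mneg M x) = x"
  by (metis neg_add neg_closed neg_unique)

lemma neg_zero [simp]: "mneg M (mzero M) = mzero M"
  by (metis add_zero neg_unique zero_closed)

lemma neg_add_distrib:
  "x \<in> mcar M \<Longrightarrow> y \<in> mcar M \<Longrightarrow> mneg M (madd M x y) = madd M (mneg M x) (mneg M y)"
  by (rule neg_unique[symmetric]) (simp_all add: add_ac)

lemma diff_eq_zero_iff: "x \<in> mcar M \<Longrightarrow> y \<in> mcar M \<Longrightarrow> madd M x (mneg M y) = mzero M \<longleftrightarrow> x = y"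
  by (metis neg_closed neg_neg neg_unique add_neg)

lemma diff_eq_iff_eq_add: "x \<in> mcar M \<Longrightarrow> y \<in> mcar M \<Longrightarrow> z \<in> mcar M \<Longrightarrow>
    madd M x (mneg M y) = z \<longleftrightarrow> x = madd M y z"
  by (metis add_comm neg_add_cancel_left neg_closed add_neg_cancel_left)

lemma add_eq_add_imp_diff_eq:
  assumes "a \<in> mcar M" "b \<in> mcar M" "c \<in> mcar M" "d \<in> mcar M" "madd M a b = madd M c d"
  shows "madd M a (mneg M c) = madd M d (mneg M b)"
proof -
  have "madd M a (mneg M c) = madd M (mneg M b) (madd M (madd M a b) (mneg M c))"
    using assms(1-4) by (simp add: add_ac)
  also have "\<dots> = madd M (mneg M b) (madd M (madd M c d) (mneg M c))"
    by (simp only: assms(5))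
  also have "\<dots> = madd M d (mneg M b)"
    using assms(1-4) by (simp add: add_ac)
  finally show ?thesis .
qed

lemma act_zero [simp]: "r \<in> carrier R \<Longrightarrow> mact M (mzero M) r = mzero M"
  by (metis act_add act_closed add_zero add_left_cancel zero_closed)

lemma act_neg: "x \<in> mcar M \<Longrightarrow> r \<in> carrier R \<Longrightarrow> mact M (mneg M x) r = mneg M (mact M x r)"
  by (metis act_add act_closed act_zero add_neg neg_closed neg_unique)

end

lemma right_module_if_finite_length: "finite_length R M \<Longrightarrow> right_module R M"
  unfolding finite_length_def by (simp add: right_module.intro)

lemma rhom_closed: "rhom R A B f \<Longrightarrow> x \<in> mcar A \<Longrightarrow> f x \<in> mcar B"
  and rhom_add: "rhom R A B f \<Longrightarrow> x \<in> mcar A \<Longrightarrow> y \<in> mcar A \<Longrightarrow> f (madd A x y) = madd B (f x) (f y)"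
  and rhom_act: "rhom R A B f \<Longrightarrow> x \<in> mcar A \<Longrightarrow> r \<in> carrier R \<Longrightarrow> f (mact A x r) = mact B (f x) r"
  unfolding rhom_def by blast+

lemma rhom_cong:
  assumes "right_module R A" "rhom R A B f" "\<And>x. x \<in> mcar A \<Longrightarrow> g x = f x"
  shows "rhom R A B g"
  using assms(2) unfolding rhom_def
  by (simp add: assms(3) right_module.add_closed[OF assms(1)] right_module.act_closed[OF assms(1)])

lemma rhom_comp: "rhom R A B f \<Longrightarrow> rhom R B C g \<Longrightarrow> rhom R A C (\<lambda>x. g (f x))"
  unfolding rhom_def by simp

context
  fixes R :: "'r ring" and A :: "('a, 'r) rmod" and B :: "('b, 'r) rmod" and f :: "'a \<Rightarrow> 'b"
  assumes A: "right_module R A" and B: "right_module R B" and f: "rhom R A B f"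
begin

interpretation A: right_module R A by (fact A)
interpretation B: right_module R B by (fact B)

lemma rhom_zero: "f (mzero A) = mzero B"
  using rhom_add[OF f, of "mzero A" "mzero A"] rhom_closed[OF f A.zero_closed]
  by (metis A.add_zero A.zero_closed B.add_left_cancel B.add_zero B.zero_closed)

lemma rhom_neg: "x \<in> mcar A \<Longrightarrow> f (mneg A x) = mneg B (f x)"
  by (rule B.neg_unique) (simp_all add: rhom_closed[OF f] rhom_add[OF f, symmetric] rhom_zero)

lemma rhom_diff: "x \<in> mcar A \<Longrightarrow> y \<in> mcar A \<Longrightarrow> f (madd A x (mneg A y)) = madd B (f x) (mneg B (f y))"
  by (simp add: rhom_add[OF f] rhom_neg)

end

lemma rhom_diff_of_homs:
  assumes "right_module R B" "rhom R A B f" "rhom R A B g"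
  shows "rhom R A B (\<lambda>x. madd B (f x) (mneg B (g x)))"
proof -
  interpret B: right_module R B by (fact assms(1))
  show ?thesis
    using assms(2,3) unfolding rhom_def
    by (simp add: B.add_ac B.neg_add_distrib B.act_add B.act_neg)
qed

section \<open>Submodules, products and fibre products\<close>

lemma submod_carrier: "submod R A S \<Longrightarrow> S \<subseteq> mcar A"
  and submod_zero: "submod R A S \<Longrightarrow> mzero A \<in> S"
  and submod_add: "submod R A S \<Longrightarrow> x \<in> S \<Longrightarrow> y \<in> S \<Longrightarrow> madd A x y \<in> S"
  and submod_neg: "submod R A S \<Longrightarrow> x \<in> S \<Longrightarrow> mneg A x \<in> S"
  and submod_act: "submod R A S \<Longrightarrow> x \<in> S \<Longrightarrow> r \<in> carrier R \<Longrightarrow> mact A x r \<in> S"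
  unfolding submod_def by blast+

lemma right_module_submod:
  assumes "right_module R A" "submod R A S"
  shows "right_module R (A\<lparr>mcar := S\<rparr>)"
proof -
  interpret A: right_module R A by (fact assms(1))
  have S: "x \<in> S \<Longrightarrow> x \<in> mcar A" for x
    using submod_carrier[OF assms(2)] by blast
  show ?thesis
    unfolding right_module_def rmodule_def
    by (simp add: A.ring submod_zero[OF assms(2)] submod_add[OF assms(2)] submod_neg[OF assms(2)]
        submod_act[OF assms(2)] S A.add_assoc A.act_add A.act_radd A.act_mult A.act_one)
      (metis S A.add_comm)
qed

lemma submod_whole: "right_module R A \<Longrightarrow> submod R A (mcar A)"
  by (simp add: submod_def right_module.zero_closed right_module.add_closed
      right_module.neg_closed right_module.act_closed)

definition prod_mod :: "('a, 'r) rmod \<Rightarrow> ('b, 'r) rmod \<Rightarrow> ('a \<times> 'b, 'r) rmod" where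
  "prod_mod A B = \<lparr> mcar = mcar A \<times> mcar B,
     madd = (\<lambda>x y. (madd A (fst x) (fst y), madd B (snd x) (snd y))),
     mzero = (mzero A, mzero B),
     mneg = (\<lambda>x. (mneg A (fst x), mneg B (snd x))),
     mact = (\<lambda>x r. (mact A (fst x) r, mact B (snd x) r)) \<rparr>"

lemma prod_mod_simps [simp]:
  "mcar (prod_mod A B) = mcar A \<times> mcar B"
  "madd (prod_mod A B) x y = (madd A (fst x) (fst y), madd B (snd x) (snd y))"
  "mzero (prod_mod A B) = (mzero A, mzero B)"
  "mneg (prod_mod A B) x = (mneg A (fst x), mneg B (snd x))"
  "mact (prod_mod A B) x r = (mact A (fst x) r, mact B (snd x) r)"
  by (simp_all add: prod_mod_def)

lemma right_module_prod_mod: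
  assumes "right_module R A" "right_module R B"
  shows "right_module R (prod_mod A B)"
proof -
  interpret A: right_module R A by (fact assms(1))
  interpret B: right_module R B by (fact assms(2))
  show ?thesis
    unfolding right_module_def rmodule_def
    by (simp add: A.ring mem_Times_iff A.add_assoc B.add_assoc A.act_add B.act_add A.act_radd
        B.act_radd A.act_mult B.act_mult A.act_one B.act_one)
      (metis A.add_comm B.add_comm)
qed

lemma submod_image:
  assumes "right_module R A" "right_module R X" "rhom R A X f" "submod R A S"
  shows "submod R X (f ` S)"
proof -
  interpret A: right_module R A by (fact assms(1))
  have "S \<subseteq> mcar A"
    using assms(4) by (rule submod_carrier)
  then have "x \<in> S \<Longrightarrow> x \<in> mcar A" for x
    by blast
  then show ?thesis
    using assms(4) rhom_zero[OF assms(1-3)] rhom_closed[OF assms(3)]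
    unfolding submod_def image_def
    by (auto simp: rhom_add[OF assms(3), symmetric] rhom_neg[OF assms(1-3), symmetric]
        rhom_act[OF assms(3), symmetric]) force+
qed

lemma submod_preimage:
  assumes "right_module R A" "right_module R X" "rhom R A X f" "submod R X S"
  shows "submod R A {a \<in> mcar A. f a \<in> S}"
proof -
  interpret A: right_module R A by (fact assms(1))
  show ?thesis
    using assms(4) unfolding submod_def
    by (auto simp: rhom_zero[OF assms(1-3)] rhom_add[OF assms(3)] rhom_neg[OF assms(1-3)]
        rhom_act[OF assms(3)])
qed

definition pullback_mod :: "('e, 'r) rmod \<Rightarrow> ('f, 'r) rmod \<Rightarrow> ('e \<Rightarrow> 'm) \<Rightarrow> ('f \<Rightarrow> 'm)
    \<Rightarrow> ('e \<times> 'f, 'r) rmod" where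
  "pullback_mod E F p q = (prod_mod E F)\<lparr>mcar := {u \<in> mcar E \<times> mcar F. p (fst u) = q (snd u)}\<rparr>"

lemma pullback_mod_simps [simp]:
  "u \<in> mcar (pullback_mod E F p q) \<longleftrightarrow> fst u \<in> mcar E \<and> snd u \<in> mcar F \<and> p (fst u) = q (snd u)"
  "madd (pullback_mod E F p q) = madd (prod_mod E F)"
  "mzero (pullback_mod E F p q) = mzero (prod_mod E F)"
  "mneg (pullback_mod E F p q) = mneg (prod_mod E F)"
  "mact (pullback_mod E F p q) = mact (prod_mod E F)"
  by (auto simp: pullback_mod_def mem_Times_iff)

lemma right_module_pullback_mod:
  assumes E: "right_module R E" and F: "right_module R F" and M: "right_module R M"
    and p: "rhom R E M p" and q: "rhom R F M q"
  shows "right_module R (pullback_mod E F p q)"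
proof -
  interpret E: right_module R E by (fact E)
  interpret F: right_module R F by (fact F)
  have "submod R (prod_mod E F) {u \<in> mcar E \<times> mcar F. p (fst u) = q (snd u)}"
    unfolding submod_def
    by (auto simp: rhom_zero[OF E M p] rhom_zero[OF F M q] rhom_neg[OF E M p] rhom_neg[OF F M q]
        rhom_add[OF p] rhom_add[OF q] rhom_act[OF p] rhom_act[OF q])
  then show ?thesis
    unfolding pullback_mod_def by (intro right_module_submod right_module_prod_mod E F)
qed

section \<open>Short exact sequences\<close>

lemma sesD:
  assumes "ses R A X B i p"
  shows "rhom R A X i" "rhom R X B p" "inj_on i (mcar A)" "p ` mcar X = mcar B"
    "{x \<in> mcar X. p x = mzero B} = i ` mcar A"
  using assms unfolding ses_def by simp_all

lemma ses_kernel_iff: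
  assumes "ses R A X B i p" "x \<in> mcar X"
  shows "p x = mzero B \<longleftrightarrow> x \<in> i ` mcar A"
  using sesD(5)[OF assms(1)] assms(2) by blast

lemma ses_comp_zero: "ses R A X B i p \<Longrightarrow> a \<in> mcar A \<Longrightarrow> p (i a) = mzero B"
  using sesD(5) by blast

lemma ses_lift_to_kernel:
  assumes ses: "ses R A X B i p" and A: "right_module R A" and N: "right_module R N"
    and h: "rhom R N X h" and ph: "\<And>x. x \<in> mcar N \<Longrightarrow> p (h x) = mzero B"
  shows "rhom R N A (\<lambda>x. inv_into (mcar A) i (h x))"
    and "\<And>x. x \<in> mcar N \<Longrightarrow> i (inv_into (mcar A) i (h x)) = h x"
proof -
  interpret A: right_module R A by (fact A)
  interpret N: right_module R N by (fact N)
  let ?l = "\<lambda>x. inv_into (mcar A) i (h x)"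
  have im: "h x \<in> i ` mcar A" if "x \<in> mcar N" for x
    using ses_kernel_iff[OF ses rhom_closed[OF h that]] ph[OF that] by blast
  show il: "i (?l x) = h x" if "x \<in> mcar N" for x
    using im[OF that] by (rule f_inv_into_f)
  have lc: "?l x \<in> mcar A" if "x \<in> mcar N" for x
    using im[OF that] by (rule inv_into_into)
  have inj: "a = b" if "a \<in> mcar A" "b \<in> mcar A" "i a = i b" for a b
    using sesD(3)[OF ses] that by (auto dest: inj_onD)
  note hi = sesD(1)[OF ses]
  show "rhom R N A ?l"
    unfolding rhom_def
  proof (intro conjI ballI)
    show "?l x \<in> mcar A" if "x \<in> mcar N" for x
      using that by (rule lc)
    show "?l (madd N x y) = madd A (?l x) (?l y)" if "x \<in> mcar N" "y \<in> mcar N" for x y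
    proof (rule inj)
      show "i (?l (madd N x y)) = i (madd A (?l x) (?l y))"
        using that il[of "madd N x y"] by (simp add: il lc rhom_add[OF hi] rhom_add[OF h])
    qed (use that lc in simp_all)
    show "?l (mact N x r) = mact A (?l x) r" if "x \<in> mcar N" "r \<in> carrier R" for x r
    proof (rule inj)
      show "i (?l (mact N x r)) = i (mact A (?l x) r)"
        using that il[of "mact N x r"] by (simp add: il lc rhom_act[OF hi] rhom_act[OF h])
    qed (use that lc in simp_all)
  qed
qed

lemma rhom_factor_through_surj:
  assumes P: "right_module R P" and E: "right_module R E" and F: "right_module R F"
    and \<pi>: "rhom R P E \<pi>" and surj: "\<pi> ` mcar P = mcar E"
    and \<phi>: "rhom R P F \<phi>" and ker: "\<And>u. u \<in> mcar P \<Longrightarrow> \<pi> u = mzero E \<Longrightarrow> \<phi> u = mzero F"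
  shows "\<exists>f. rhom R E F f \<and> (\<forall>u\<in>mcar P. f (\<pi> u) = \<phi> u)"
proof -
  interpret P: right_module R P by (fact P)
  interpret E: right_module R E by (fact E)
  interpret F: right_module R F by (fact F)
  have resp: "\<phi> u = \<phi> v" if "u \<in> mcar P" "v \<in> mcar P" "\<pi> u = \<pi> v" for u v
  proof -
    have "\<phi> (madd P u (mneg P v)) = mzero F"
      using that by (intro ker) (simp_all add: rhom_diff[OF P E \<pi>] rhom_closed[OF \<pi>])
    then show ?thesis
      using that by (simp add: rhom_diff[OF P F \<phi>] rhom_closed[OF \<phi>] F.diff_eq_zero_iff)
  qed
  let ?f = "\<lambda>e. \<phi> (inv_into (mcar P) \<pi> e)"
  have f\<pi>: "?f (\<pi> u) = \<phi> u" if "u \<in> mcar P" for u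
    using that by (intro resp) (auto intro: inv_into_into f_inv_into_f)
  have ex: "\<exists>u\<in>mcar P. e = \<pi> u" if "e \<in> mcar E" for e
    using that surj by blast
  have "rhom R E F ?f"
    unfolding rhom_def
  proof (intro conjI ballI)
    show "?f e \<in> mcar F" if "e \<in> mcar E" for e
      using that surj by (metis rhom_closed[OF \<phi>] inv_into_into)
    show "?f (madd E e e') = madd F (?f e) (?f e')" if "e \<in> mcar E" "e' \<in> mcar E" for e e'
      using ex[OF that(1)] ex[OF that(2)]
      by (auto simp: rhom_add[OF \<pi>, symmetric] f\<pi> rhom_add[OF \<phi>])
    show "?f (mact E e r) = mact F (?f e) r" if "e \<in> mcar E" "r \<in> carrier R" for e r
      using ex[OF that(1)] that(2) by (auto simp: rhom_act[OF \<pi>, symmetric] f\<pi> rhom_act[OF \<phi>])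
  qed
  with f\<pi> show ?thesis
    by blast
qed

section \<open>Extending homomorphisms into add(T)\<close>

lemma direct_sum_unique:
  assumes T: "right_module R T" and S: "submod R T S" and C: "submod R T C" "S \<inter> C = {mzero T}"
    and s: "s \<in> S" "s' \<in> S" and c: "c \<in> C" "c' \<in> C" and eq: "madd T s c = madd T s' c'"
  shows "s = s'"
proof -
  interpret T: right_module R T by (fact T)
  have in_T: "s \<in> mcar T" "s' \<in> mcar T" "c \<in> mcar T" "c' \<in> mcar T"
    using s c submod_carrier[OF S] submod_carrier[OF C(1)] by blast+
  have "madd T s (mneg T s') = madd T c' (mneg T c)"
    by (rule T.add_eq_add_imp_diff_eq[OF in_T(1,3,2,4) eq])
  moreover have "madd T s (mneg T s') \<in> S" "madd T c' (mneg T c) \<in> C"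
    using submod_add[OF S s(1) submod_neg[OF S s(2)]] submod_add[OF C(1) c(2) submod_neg[OF C(1) c(1)]]
    by blast+
  ultimately have "madd T s (mneg T s') = mzero T"
    using C(2) by auto
  then show ?thesis
    using in_T by (simp add: T.diff_eq_zero_iff)
qed

lemma summand_projection:
  assumes T: "right_module R T" and S: "summand R T S"
  shows "\<exists>e. rhom R T T e \<and> (\<forall>x\<in>mcar T. e x \<in> S) \<and> (\<forall>x\<in>S. e x = x)"
proof -
  interpret T: right_module R T by (fact T)
  obtain C where C: "submod R T C" "S \<inter> C = {mzero T}"
    and decomp: "\<And>x. x \<in> mcar T \<Longrightarrow> \<exists>s\<in>S. \<exists>c\<in>C. x = madd T s c"
    using S unfolding summand_def by blast
  have subS: "submod R T S"
    using S unfolding summand_def by blast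
  have inS: "x \<in> S \<Longrightarrow> x \<in> mcar T" and inC: "x \<in> C \<Longrightarrow> x \<in> mcar T" for x
    using submod_carrier[OF subS] submod_carrier[OF C(1)] by blast+
  have unique: "s = s'"
    if "s \<in> S" "s' \<in> S" "c \<in> C" "c' \<in> C" "madd T s c = madd T s' c'" for s s' c c'
    by (rule direct_sum_unique[OF T subS C that])
  define e where "e x = (SOME s. s \<in> S \<and> (\<exists>c\<in>C. x = madd T s c))" for x
  have e: "e x \<in> S \<and> (\<exists>c\<in>C. x = madd T (e x) c)" if "x \<in> mcar T" for x
    unfolding e_def by (rule someI_ex) (use decomp[OF that] in blast)
  have e_eq: "e x = s" if "x \<in> mcar T" "s \<in> S" "c \<in> C" "x = madd T s c" for x s c
    using e[OF that(1)] unique that by metis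
  show ?thesis
  proof (intro exI conjI ballI)
    show "e x \<in> S" if "x \<in> mcar T" for x
      using e[OF that] by blast
    show "e x = x" if "x \<in> S" for x
      using that by (intro e_eq[of x x "mzero T"]) (simp_all add: inS submod_zero[OF C(1)])
    show "rhom R T T e"
      unfolding rhom_def
    proof (intro conjI ballI)
      show "e x \<in> mcar T" if "x \<in> mcar T" for x
        using e[OF that] inS by blast
      show "e (madd T x y) = madd T (e x) (e y)" if xy: "x \<in> mcar T" "y \<in> mcar T" for x y
      proof -
        obtain c d where c: "c \<in> C" "x = madd T (e x) c" and d: "d \<in> C" "y = madd T (e y) d"
          using e xy by blast
        have exy: "e x \<in> S" "e y \<in> S"
          using e xy by blast+
        have "madd T x y = madd T (madd T (e x) c) (madd T (e y) d)"
          using c(2) d(2) by (rule arg_cong2)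
        also have "\<dots> = madd T (madd T (e x) (e y)) (madd T c d)"
          using c(1) d(1) exy by (simp add: inS inC T.add_ac)
        finally have sum: "madd T x y = madd T (madd T (e x) (e y)) (madd T c d)" .
        show ?thesis
          by (rule e_eq[OF _ _ _ sum])
            (simp_all add: xy c(1) d(1) exy submod_add[OF subS] submod_add[OF C(1)])
      qed
      show "e (mact T x r) = mact T (e x) r" if xr: "x \<in> mcar T" "r \<in> carrier R" for x r
      proof -
        obtain c where c: "c \<in> C" "x = madd T (e x) c"
          using e xr by blast
        have ex: "e x \<in> S"
          using e xr by blast
        have "mact T x r = mact T (madd T (e x) c) r"
          using c(2) by (rule arg_cong)
        also have "\<dots> = madd T (mact T (e x) r) (mact T c r)"
          using c(1) ex xr by (simp add: inS inC T.act_add)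
        finally have prod: "mact T x r = madd T (mact T (e x) r) (mact T c r)" .
        show ?thesis
          by (rule e_eq[OF _ _ _ prod])
            (simp_all add: xr c(1) ex submod_act[OF subS] submod_act[OF C(1)])
      qed
    qed
  qed
qed

definition homs_extend :: "'r ring \<Rightarrow> ('a \<Rightarrow> 'p) \<Rightarrow> ('a, 'r) rmod \<Rightarrow> ('p, 'r) rmod
    \<Rightarrow> ('n, 'r) rmod \<Rightarrow> bool" where
  "homs_extend R \<kappa> A P N \<longleftrightarrow>
     (\<forall>\<pi>. rhom R A N \<pi> \<longrightarrow> (\<exists>\<rho>. rhom R P N \<rho> \<and> (\<forall>a\<in>mcar A. \<rho> (\<kappa> a) = \<pi> a)))"

lemma homs_extendD:
  assumes "homs_extend R \<kappa> A P N" "rhom R A N \<pi>"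
  obtains \<rho> where "rhom R P N \<rho>" "\<And>a. a \<in> mcar A \<Longrightarrow> \<rho> (\<kappa> a) = \<pi> a"
  using assms unfolding homs_extend_def by blast

lemma rhom_dsum_component:
  assumes \<pi>: "rhom R A (dsum T k S) \<pi>" and S: "S l \<subseteq> mcar T" and l: "l < k"
  shows "rhom R A T (\<lambda>a. \<pi> a l)"
  unfolding rhom_def
proof (intro conjI ballI)
  show "\<pi> a l \<in> mcar T" if "a \<in> mcar A" for a
    using rhom_closed[OF \<pi> that] S l by (auto simp: dsum_def)
qed (use l in \<open>simp_all add: rhom_add[OF \<pi>] rhom_act[OF \<pi>] dsum_def\<close>)

lemma rhom_into_dsum:
  assumes \<phi>: "\<And>l. l < k \<Longrightarrow> rhom R P T (\<phi> l)" and in_S: "\<And>l u. l < k \<Longrightarrow> u \<in> mcar P \<Longrightarrow> \<phi> l u \<in> S l"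
  shows "rhom R P (dsum T k S) (\<lambda>u l. if l < k then \<phi> l u else mzero T)"
  unfolding rhom_def
proof (intro conjI ballI)
  show "(\<lambda>l. if l < k then \<phi> l u else mzero T) \<in> mcar (dsum T k S)" if "u \<in> mcar P" for u
    using that by (simp add: dsum_def in_S)
  show "(\<lambda>l. if l < k then \<phi> l (madd P u v) else mzero T) =
      madd (dsum T k S) (\<lambda>l. if l < k then \<phi> l u else mzero T) (\<lambda>l. if l < k then \<phi> l v else mzero T)"
    if "u \<in> mcar P" "v \<in> mcar P" for u v
    using that by (simp add: fun_eq_iff dsum_def rhom_add[OF \<phi>] split: if_split)
  show "(\<lambda>l. if l < k then \<phi> l (mact P u c) else mzero T) =
      mact (dsum T k S) (\<lambda>l. if l < k then \<phi> l u else mzero T) c"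
    if "u \<in> mcar P" "c \<in> carrier R" for u c
    using that by (simp add: fun_eq_iff dsum_def rhom_act[OF \<phi>] split: if_split)
qed

text \<open>Each component is extended to P separately and then projected back onto its summand.\<close>

lemma homs_extend_dsum:
  assumes T: "right_module R T" and S: "\<And>l. l < k \<Longrightarrow> summand R T (S l)"
    and ext: "homs_extend R \<kappa> A P T"
  shows "homs_extend R \<kappa> A P (dsum T k S)"
  unfolding homs_extend_def
proof (intro allI impI)
  fix \<pi> assume \<pi>: "rhom R A (dsum T k S) \<pi>"
  have S_sub: "S l \<subseteq> mcar T" if "l < k" for l
    using S[OF that] unfolding summand_def by (blast dest: submod_carrier)
  have "\<forall>l\<in>{..<k}. \<exists>r. rhom R P T r \<and> (\<forall>a\<in>mcar A. r (\<kappa> a) = \<pi> a l)"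
    using ext rhom_dsum_component[OF \<pi> S_sub] unfolding homs_extend_def by blast
  from bchoice[OF this] obtain r
    where "\<forall>l\<in>{..<k}. rhom R P T (r l) \<and> (\<forall>a\<in>mcar A. r l (\<kappa> a) = \<pi> a l)" ..
  then have r: "\<And>l. l < k \<Longrightarrow> rhom R P T (r l)"
    "\<And>l a. l < k \<Longrightarrow> a \<in> mcar A \<Longrightarrow> r l (\<kappa> a) = \<pi> a l"
    by simp_all
  have "\<forall>l\<in>{..<k}. \<exists>e. rhom R T T e \<and> (\<forall>x\<in>mcar T. e x \<in> S l) \<and> (\<forall>x\<in>S l. e x = x)"
    using summand_projection[OF T S] by blast
  from bchoice[OF this] obtain e
    where "\<forall>l\<in>{..<k}. rhom R T T (e l) \<and> (\<forall>x\<in>mcar T. e l x \<in> S l) \<and> (\<forall>x\<in>S l. e l x = x)" ..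
  then have e: "\<And>l. l < k \<Longrightarrow> rhom R T T (e l)"
    "\<And>l x. l < k \<Longrightarrow> x \<in> mcar T \<Longrightarrow> e l x \<in> S l" "\<And>l x. l < k \<Longrightarrow> x \<in> S l \<Longrightarrow> e l x = x"
    by blast+
  let ?\<rho> = "\<lambda>u l. if l < k then e l (r l u) else mzero T"
  have "rhom R P (dsum T k S) ?\<rho>"
    using rhom_comp[OF r(1) e(1)] e(2) rhom_closed[OF r(1)] by (intro rhom_into_dsum) simp_all
  moreover have "?\<rho> (\<kappa> a) = \<pi> a" if a: "a \<in> mcar A" for a
  proof
    show "?\<rho> (\<kappa> a) l = \<pi> a l" for l
      using rhom_closed[OF \<pi> a] by (cases "l < k") (auto simp: dsum_def r(2)[OF _ a] e(3))
  qed
  ultimately show "\<exists>\<rho>. rhom R P (dsum T k S) \<rho> \<and> (\<forall>a\<in>mcar A. \<rho> (\<kappa> a) = \<pi> a)"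
    by blast
qed

lemma homs_extend_riso:
  assumes "riso R N Y" "homs_extend R \<kappa> A P Y"
  shows "homs_extend R \<kappa> A P N"
  unfolding homs_extend_def
proof (intro allI impI)
  fix \<pi> assume \<pi>: "rhom R A N \<pi>"
  obtain \<alpha> \<beta> where \<alpha>: "rhom R N Y \<alpha>" and \<beta>: "rhom R Y N \<beta>" and \<beta>\<alpha>: "\<forall>x\<in>mcar N. \<beta> (\<alpha> x) = x"
    using assms(1) unfolding riso_def by blast
  obtain \<rho> where "rhom R P Y \<rho>" "\<And>a. a \<in> mcar A \<Longrightarrow> \<rho> (\<kappa> a) = \<alpha> (\<pi> a)"
    using homs_extendD[OF assms(2) rhom_comp[OF \<pi> \<alpha>]] by blast
  then show "\<exists>\<rho>. rhom R P N \<rho> \<and> (\<forall>a\<in>mcar A. \<rho> (\<kappa> a) = \<pi> a)"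
    using rhom_comp[OF _ \<beta>] \<beta>\<alpha> rhom_closed[OF \<pi>] by (intro exI[of _ "\<lambda>u. \<beta> (\<rho> u)"]) auto
qed

lemma homs_extend_in_add:
  assumes "right_module R T" "homs_extend R \<kappa> A P T" "in_add R T N"
  shows "homs_extend R \<kappa> A P N"
proof -
  obtain Y k S where "\<forall>l<k. summand R T (S l)" "Y = dsum T k S" "riso R N Y"
    using assms(3) unfolding in_add_def is_add_model_def by blast
  then show ?thesis
    using homs_extend_riso homs_extend_dsum[OF assms(1) _ assms(2)] by blast
qed

section \<open>Quotient modules\<close>

text \<open>The quotient of A by K, realised on a prescribed set B via a surjection \<Phi> whose fibres
  are the cosets of K (see quotient_map).\<close>

definition quotient_mod :: "('u, 'r) rmod \<Rightarrow> ('u \<Rightarrow> 'v) \<Rightarrow> 'v set \<Rightarrow> ('v, 'r) rmod" where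
  "quotient_mod A \<Phi> B = \<lparr> mcar = B,
     madd = (\<lambda>x y. \<Phi> (madd A (inv_into (mcar A) \<Phi> x) (inv_into (mcar A) \<Phi> y))),
     mzero = \<Phi> (mzero A),
     mneg = (\<lambda>x. \<Phi> (mneg A (inv_into (mcar A) \<Phi> x))),
     mact = (\<lambda>x r. \<Phi> (mact A (inv_into (mcar A) \<Phi> x) r)) \<rparr>"

locale quotient_map = right_module R A
  for R :: "'r ring" and A :: "('u, 'r) rmod" +
  fixes K :: "'u set" and \<Phi> :: "'u \<Rightarrow> 'v" and B :: "'v set"
  assumes submod_K: "submod R A K"
    and image: "\<Phi> ` mcar A = B"
    and fibres: "\<And>u v. u \<in> mcar A \<Longrightarrow> v \<in> mcar A \<Longrightarrow> \<Phi> u = \<Phi> v \<longleftrightarrow> madd A v (mneg A u) \<in> K"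
begin

abbreviation "Q \<equiv> quotient_mod A \<Phi> B"

lemma rep: "u \<in> mcar A \<Longrightarrow> inv_into (mcar A) \<Phi> (\<Phi> u) \<in> mcar A \<and> \<Phi> (inv_into (mcar A) \<Phi> (\<Phi> u)) = \<Phi> u"
  by (simp add: inv_into_into f_inv_into_f)

lemma image_in [simp]: "u \<in> mcar A \<Longrightarrow> \<Phi> u \<in> B"
  using image by blast

lemma ring_closed [simp]:
  "r \<in> carrier R \<Longrightarrow> s \<in> carrier R \<Longrightarrow> r \<oplus>\<^bsub>R\<^esub> s \<in> carrier R"
  "r \<in> carrier R \<Longrightarrow> s \<in> carrier R \<Longrightarrow> r \<otimes>\<^bsub>R\<^esub> s \<in> carrier R"
  "\<one>\<^bsub>R\<^esub> \<in> carrier R"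
  using ring by (simp_all add: ring.ring_simprules)

lemma resp_add:
  assumes "u \<in> mcar A" "v \<in> mcar A" "u' \<in> mcar A" "v' \<in> mcar A" "\<Phi> u = \<Phi> u'" "\<Phi> v = \<Phi> v'"
  shows "\<Phi> (madd A u v) = \<Phi> (madd A u' v')"
proof -
  have "madd A (madd A u' v') (mneg A (madd A u v)) = madd A (madd A u' (mneg A u)) (madd A v' (mneg A v))"
    using assms(1-4) by (simp add: neg_add_distrib add_ac)
  then show ?thesis
    using assms submod_add[OF submod_K] by (simp add: fibres)
qed

lemma resp_neg:
  assumes "u \<in> mcar A" "u' \<in> mcar A" "\<Phi> u = \<Phi> u'"
  shows "\<Phi> (mneg A u) = \<Phi> (mneg A u')"
proof -
  have "madd A (mneg A u') (mneg A (mneg A u)) = mneg A (madd A u' (mneg A u))"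
    using assms(1,2) by (simp add: neg_add_distrib)
  then show ?thesis
    using assms submod_neg[OF submod_K] by (simp add: fibres)
qed

lemma resp_act:
  assumes "u \<in> mcar A" "u' \<in> mcar A" "r \<in> carrier R" "\<Phi> u = \<Phi> u'"
  shows "\<Phi> (mact A u r) = \<Phi> (mact A u' r)"
proof -
  have "madd A (mact A u' r) (mneg A (mact A u r)) = mact A (madd A u' (mneg A u)) r"
    using assms(1-3) by (simp add: act_add act_neg)
  then show ?thesis
    using assms submod_act[OF submod_K] by (simp add: fibres)
qed

lemma quotient_simps:
  "mcar Q = B"
  "mzero Q = \<Phi> (mzero A)"
  "u \<in> mcar A \<Longrightarrow> v \<in> mcar A \<Longrightarrow> madd Q (\<Phi> u) (\<Phi> v) = \<Phi> (madd A u v)"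
  "u \<in> mcar A \<Longrightarrow> mneg Q (\<Phi> u) = \<Phi> (mneg A u)"
  "u \<in> mcar A \<Longrightarrow> r \<in> carrier R \<Longrightarrow> mact Q (\<Phi> u) r = \<Phi> (mact A u r)"
proof -
  show "mcar Q = B" "mzero Q = \<Phi> (mzero A)"
    by (simp_all add: quotient_mod_def)
  show "madd Q (\<Phi> u) (\<Phi> v) = \<Phi> (madd A u v)" if "u \<in> mcar A" "v \<in> mcar A" for u v
  proof -
    have "madd Q (\<Phi> u) (\<Phi> v) =
        \<Phi> (madd A (inv_into (mcar A) \<Phi> (\<Phi> u)) (inv_into (mcar A) \<Phi> (\<Phi> v)))"
      by (simp add: quotient_mod_def)
    also have "\<dots> = \<Phi> (madd A u v)"
      using rep[OF that(1)] rep[OF that(2)] that by (intro resp_add) simp_all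
    finally show ?thesis .
  qed
  show "mneg Q (\<Phi> u) = \<Phi> (mneg A u)" if "u \<in> mcar A" for u
  proof -
    have "mneg Q (\<Phi> u) = \<Phi> (mneg A (inv_into (mcar A) \<Phi> (\<Phi> u)))"
      by (simp add: quotient_mod_def)
    also have "\<dots> = \<Phi> (mneg A u)"
      using rep[OF that] that by (intro resp_neg) simp_all
    finally show ?thesis .
  qed
  show "mact Q (\<Phi> u) r = \<Phi> (mact A u r)" if "u \<in> mcar A" "r \<in> carrier R" for u r
  proof -
    have "mact Q (\<Phi> u) r = \<Phi> (mact A (inv_into (mcar A) \<Phi> (\<Phi> u)) r)"
      by (simp add: quotient_mod_def)
    also have "\<dots> = \<Phi> (mact A u r)"
      using rep[OF that(1)] that by (intro resp_act) simp_all
    finally show ?thesis .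
  qed
qed

lemma rhom_quotient: "rhom R A Q \<Phi>"
  using image by (auto simp: rhom_def quotient_simps)

lemma ball_quotient: "(\<forall>x\<in>B. P x) \<longleftrightarrow> (\<forall>u\<in>mcar A. P (\<Phi> u))"
  by (simp add: image[symmetric])

lemma right_module_quotient: "right_module R Q"
  unfolding right_module_def rmodule_def quotient_simps(1) ball_quotient
  by (intro conjI ballI) (simp_all add: ring quotient_simps add_ac act_add act_radd act_mult act_one)

lemma rhom_from_quotient: "rhom R A N (\<lambda>u. g (\<Phi> u)) \<Longrightarrow> rhom R Q N g"
  unfolding rhom_def quotient_simps(1) ball_quotient by (simp add: quotient_simps)

end

section \<open>Push-outs\<close>

locale pushout_data =
  T: right_module R T + T2: right_module R T2 + F: right_module R F + M: right_module R M
  for R :: "'r ring" and T :: "('t, 'r) rmod" and T2 :: "('b, 'r) rmod"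
    and F :: "('f, 'r) rmod" and M :: "('m, 'r) rmod" +
  fixes j :: "'b \<Rightarrow> 'f" and q :: "'f \<Rightarrow> 'm" and \<pi> :: "'b \<Rightarrow> 't"
  assumes ses: "ses R T2 F M j q" and \<pi>: "rhom R T2 T \<pi>"
begin

lemmas j = sesD(1)[OF ses] and q = sesD(2)[OF ses]

lemma j_closed [simp]: "b \<in> mcar T2 \<Longrightarrow> j b \<in> mcar F"
  and q_closed [simp]: "f \<in> mcar F \<Longrightarrow> q f \<in> mcar M"
  and \<pi>_closed [simp]: "b \<in> mcar T2 \<Longrightarrow> \<pi> b \<in> mcar T"
  by (simp_all add: rhom_closed[OF j] rhom_closed[OF q] rhom_closed[OF \<pi>])

lemma q_j [simp]: "b \<in> mcar T2 \<Longrightarrow> q (j b) = mzero M"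
  by (rule ses_comp_zero[OF ses])

text \<open>A set-theoretic section of q, normalised at 0 so that push (t, 0) = (t, 0) below.\<close>

definition sec :: "'m \<Rightarrow> 'f" where
  "sec m = (if m = mzero M then mzero F else inv_into (mcar F) q m)"

lemma sec: "m \<in> mcar M \<Longrightarrow> sec m \<in> mcar F \<and> q (sec m) = m"
  using sesD(4)[OF ses] rhom_zero[OF F.right_module_axioms M.right_module_axioms q]
  by (auto simp: sec_def intro: inv_into_into f_inv_into_f)

definition lift :: "'f \<Rightarrow> 'b" where
  "lift f = inv_into (mcar T2) j (madd F f (mneg F (sec (q f))))"

lemma lift: "f \<in> mcar F \<Longrightarrow> lift f \<in> mcar T2 \<and> j (lift f) = madd F f (mneg F (sec (q f)))"
proof -
  assume f: "f \<in> mcar F"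
  have "madd F f (mneg F (sec (q f))) \<in> j ` mcar T2"
    using f sec[of "q f"] ses_kernel_iff[OF ses, of "madd F f (mneg F (sec (q f)))"]
    by (simp add: rhom_diff[OF F.right_module_axioms M.right_module_axioms q])
  then show ?thesis
    unfolding lift_def by (simp add: inv_into_into f_inv_into_f)
qed

lemma lift_unique: "f \<in> mcar F \<Longrightarrow> b \<in> mcar T2 \<Longrightarrow> j b = madd F f (mneg F (sec (q f))) \<Longrightarrow> lift f = b"
  using lift sesD(3)[OF ses] by (metis inj_onD)

text \<open>The push-out of F along \<pi> is (T \<times> F)/push_kernel, realised on T \<times> M: since
  f = sec (q f) + j (lift f), the pair (t, f) is congruent to (t + \<pi> (lift f), sec (q f)),
  which push records as (t + \<pi> (lift f), q f).\<close>

definition push :: "'t \<times> 'f \<Rightarrow> 't \<times> 'm" where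
  "push u = (madd T (fst u) (\<pi> (lift (snd u))), q (snd u))"

definition push_kernel :: "('t \<times> 'f) set" where
  "push_kernel = (\<lambda>b. (\<pi> b, mneg F (j b))) ` mcar T2"

lemma submod_push_kernel: "submod R (prod_mod T F) push_kernel"
proof -
  have "rhom R T2 (prod_mod T F) (\<lambda>b. (\<pi> b, mneg F (j b)))"
    unfolding rhom_def
    by (simp add: rhom_add[OF \<pi>] rhom_add[OF j] rhom_act[OF \<pi>] rhom_act[OF j] F.neg_add_distrib
        F.act_neg)
  then show ?thesis
    unfolding push_kernel_def
    by (rule submod_image[OF T2.right_module_axioms
          right_module_prod_mod[OF T.right_module_axioms F.right_module_axioms] _
          submod_whole[OF T2.right_module_axioms]])
qed

lemma push_fibres:
  assumes u: "u \<in> mcar T \<times> mcar F" and v: "v \<in> mcar T \<times> mcar F"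
  shows "push u = push v \<longleftrightarrow> madd (prod_mod T F) v (mneg (prod_mod T F) u) \<in> push_kernel"
proof -
  obtain t f t' f' where uv: "u = (t, f)" "v = (t', f')"
    and tf: "t \<in> mcar T" "f \<in> mcar F" "t' \<in> mcar T" "f' \<in> mcar F"
    using u v by auto
  note lf = lift[OF tf(2)] and lf' = lift[OF tf(4)]
  show ?thesis
  proof
    assume "push u = push v"
    then have qf: "q f' = q f" and
      tt: "madd T t' (\<pi> (lift f')) = madd T t (\<pi> (lift f))"
      unfolding uv push_def by simp_all
    define b where "b = madd T2 (lift f) (mneg T2 (lift f'))"
    have b: "b \<in> mcar T2"
      using lf lf' by (simp add: b_def)
    have "madd T t' (mneg T t) = \<pi> b"
      using T.add_eq_add_imp_diff_eq[OF _ _ _ _ tt] tf lf lf'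
      by (simp add: b_def rhom_diff[OF T2.right_module_axioms T.right_module_axioms \<pi>])
    moreover have "madd F f' (mneg F f) = mneg F (j b)"
      using tf lf lf' sec[of "q f"] qf
      by (simp add: b_def rhom_diff[OF T2.right_module_axioms F.right_module_axioms j]
          F.neg_add_distrib F.add_ac)
    ultimately show "madd (prod_mod T F) v (mneg (prod_mod T F) u) \<in> push_kernel"
      unfolding uv push_kernel_def using b by auto
  next
    assume "madd (prod_mod T F) v (mneg (prod_mod T F) u) \<in> push_kernel"
    then obtain b where b: "b \<in> mcar T2" and "madd T t' (mneg T t) = \<pi> b"
      "madd F f' (mneg F f) = mneg F (j b)"
      unfolding uv push_kernel_def by auto
    then have t': "t' = madd T t (\<pi> b)" and f': "f' = madd F f (mneg F (j b))"
      using tf by (simp_all add: T.diff_eq_iff_eq_add F.diff_eq_iff_eq_add)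
    have qf: "q (madd F f (mneg F (j b))) = q f"
      using tf b by (simp add: rhom_diff[OF F.right_module_axioms M.right_module_axioms q])
    have "lift f' = madd T2 (lift f) (mneg T2 b)"
      using tf b lf sec[of "q f"]
      by (intro lift_unique) (simp_all add: qf f' rhom_diff[OF T2.right_module_axioms
          F.right_module_axioms j] F.add_ac)
    then show "push u = push v"
      unfolding uv push_def using tf b lf qf
      by (simp add: t' f' rhom_diff[OF T2.right_module_axioms T.right_module_axioms \<pi>] T.add_ac)
  qed
qed

lemma snd_push: "snd (push u) = q (snd u)"
  by (simp add: push_def)

lemma push_sec: "t \<in> mcar T \<Longrightarrow> m \<in> mcar M \<Longrightarrow> push (t, sec m) = (t, m)"
  using sec[of m] lift_unique[of "sec m" "mzero T2"]
  by (simp add: push_def rhom_zero[OF T2.right_module_axioms F.right_module_axioms j]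
      rhom_zero[OF T2.right_module_axioms T.right_module_axioms \<pi>])

lemma push_zero: "t \<in> mcar T \<Longrightarrow> push (t, mzero F) = (t, mzero M)"
  using push_sec[of t "mzero M"] by (simp add: sec_def)

lemma push_image: "push ` (mcar T \<times> mcar F) = mcar T \<times> mcar M"
proof
  show "push ` (mcar T \<times> mcar F) \<subseteq> mcar T \<times> mcar M"
    using lift by (auto simp: push_def)
  show "mcar T \<times> mcar M \<subseteq> push ` (mcar T \<times> mcar F)"
    using sec push_sec by (force intro!: image_eqI)
qed

sublocale Push: quotient_map R "prod_mod T F" push_kernel push "mcar T \<times> mcar M"
  by (rule quotient_map.intro[OF right_module_prod_mod[OF T.right_module_axioms F.right_module_axioms]])
    (simp add: quotient_map_axioms_def submod_push_kernel push_image push_fibres)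

lemma ses_pushout: "ses R T Push.Q M (\<lambda>t. (t, mzero M)) snd"
  unfolding ses_def
proof (intro conjI)
  show "rhom R T Push.Q (\<lambda>t. (t, mzero M))"
    using rhom_comp[of R T "prod_mod T F" "\<lambda>t. (t, mzero F)", OF _ Push.rhom_quotient]
    by (rule rhom_cong[OF T.right_module_axioms]) (auto simp: rhom_def push_zero)
  show "rhom R Push.Q M snd"
    by (rule Push.rhom_from_quotient) (simp add: rhom_def push_def rhom_add[OF q] rhom_act[OF q])
  show "snd ` mcar Push.Q = mcar M"
  proof -
    have "mcar T \<noteq> {}"
      using T.zero_closed by blast
    then show ?thesis
      by (simp add: Push.quotient_simps)
  qed
qed (auto simp: Push.quotient_simps inj_on_def)

lemma rhom_push_right: "rhom R F Push.Q (\<lambda>f. push (mzero T, f))"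
  using rhom_comp[of R F "prod_mod T F" "\<lambda>f. (mzero T, f)", OF _ Push.rhom_quotient]
  by (simp add: rhom_def)

lemma push_j: "b \<in> mcar T2 \<Longrightarrow> push (mzero T, j b) = (\<pi> b, mzero M)"
  using push_fibres[of "(mzero T, j b)" "(\<pi> b, mzero F)"]
  by (simp add: push_zero[symmetric] push_kernel_def)

end

section \<open>Modules of finite length\<close>

definition covers :: "'r ring \<Rightarrow> ('a, 'r) rmod \<Rightarrow> 'a set \<Rightarrow> 'a set \<Rightarrow> bool" where
  "covers R M C C' \<longleftrightarrow> C \<subset> C' \<and> \<not> (\<exists>S. submod R M S \<and> C \<subset> S \<and> S \<subset> C')"

definition composition_series :: "'r ring \<Rightarrow> ('a, 'r) rmod \<Rightarrow> nat \<Rightarrow> (nat \<Rightarrow> 'a set) \<Rightarrow> bool" where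
  "composition_series R M n C \<longleftrightarrow> C 0 = {mzero M} \<and> C n = mcar M \<and>
     (\<forall>i\<le>n. submod R M (C i)) \<and> (\<forall>i<n. covers R M (C i) (C (Suc i)))"

lemma finite_length_iff: "finite_length R M \<longleftrightarrow> rmodule R M \<and> (\<exists>n C. composition_series R M n C)"
  unfolding finite_length_def composition_series_def covers_def by (rule refl)

lemma covers_image:
  assumes A: "right_module R A" and X: "right_module R X" and i: "rhom R A X i"
    and inj: "inj_on i (mcar A)" and C: "submod R A C" "submod R A C'" and cov: "covers R A C C'"
  shows "covers R X (i ` C) (i ` C')"
  unfolding covers_def
proof
  note sub = C[THEN submod_carrier]
  have "C \<subset> C'"
    using cov unfolding covers_def by blast
  then show "i ` C \<subset> i ` C'"
    using inj_on_image_eq_iff[OF inj sub] by (auto simp: psubset_eq)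
  show "\<not> (\<exists>S. submod R X S \<and> i ` C \<subset> S \<and> S \<subset> i ` C')"
  proof
    assume "\<exists>S. submod R X S \<and> i ` C \<subset> S \<and> S \<subset> i ` C'"
    then obtain S where S: "submod R X S" "i ` C \<subset> S" "S \<subset> i ` C'"
      by blast
    define S' where "S' = {a \<in> mcar A. i a \<in> S}"
    have "submod R A S'"
      unfolding S'_def by (rule submod_preimage[OF A X i S(1)])
    have "S \<subseteq> i ` mcar A"
      using S(3) sub by blast
    then have S_eq: "i ` S' = S"
      unfolding S'_def by auto
    have "C \<subseteq> S'"
      using S(2) sub unfolding S'_def by auto
    moreover have "C \<noteq> S'"
      using S(2) S_eq by auto
    moreover have "S' \<subseteq> C'"
    proof
      fix a assume a: "a \<in> S'"
      then obtain c where "c \<in> C'" "i a = i c"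
        using S(3) unfolding S'_def by blast
      then show "a \<in> C'"
        using a sub inj unfolding S'_def inj_on_def by auto
    qed
    moreover have "S' \<noteq> C'"
      using S(3) S_eq by auto
    ultimately show False
      using cov \<open>submod R A S'\<close> unfolding covers_def by blast
  qed
qed

lemma covers_preimage:
  assumes X: "right_module R X" and B: "right_module R B" and p: "rhom R X B p"
    and surj: "p ` mcar X = mcar B" and D: "submod R B D" "submod R B D'" and cov: "covers R B D D'"
  shows "covers R X {x \<in> mcar X. p x \<in> D} {x \<in> mcar X. p x \<in> D'}"
  unfolding covers_def
proof
  interpret X: right_module R X by (fact X)
  note sub = D[THEN submod_carrier]
  have img: "p ` {x \<in> mcar X. p x \<in> E} = E" if E: "E \<subseteq> mcar B" for E
  proof
    show "E \<subseteq> p ` {x \<in> mcar X. p x \<in> E}"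
    proof
      fix e assume "e \<in> E"
      then obtain x where "x \<in> mcar X" "e = p x"
        using E surj by blast
      then show "e \<in> p ` {x \<in> mcar X. p x \<in> E}"
        using \<open>e \<in> E\<close> by blast
    qed
  qed blast
  have "D \<subset> D'"
    using cov unfolding covers_def by blast
  moreover have "{x \<in> mcar X. p x \<in> D} \<noteq> {x \<in> mcar X. p x \<in> D'}"
  proof
    assume "{x \<in> mcar X. p x \<in> D} = {x \<in> mcar X. p x \<in> D'}"
    then have "p ` {x \<in> mcar X. p x \<in> D} = p ` {x \<in> mcar X. p x \<in> D'}"
      by (rule arg_cong)
    then show False
      using img[OF sub(1)] img[OF sub(2)] \<open>D \<subset> D'\<close> by simp
  qed
  ultimately show "{x \<in> mcar X. p x \<in> D} \<subset> {x \<in> mcar X. p x \<in> D'}"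
    unfolding psubset_eq by blast
  show "\<not> (\<exists>S. submod R X S \<and> {x \<in> mcar X. p x \<in> D} \<subset> S \<and> S \<subset> {x \<in> mcar X. p x \<in> D'})"
  proof
    assume "\<exists>S. submod R X S \<and> {x \<in> mcar X. p x \<in> D} \<subset> S \<and> S \<subset> {x \<in> mcar X. p x \<in> D'}"
    then obtain S where S: "submod R X S" "{x \<in> mcar X. p x \<in> D} \<subset> S"
      "S \<subset> {x \<in> mcar X. p x \<in> D'}"
      by blast
    have SX: "S \<subseteq> mcar X"
      using S(1) by (rule submod_carrier)
    text \<open>S contains the kernel of p, hence is the full preimage of its image.\<close>
    have full: "{x \<in> mcar X. p x \<in> p ` S} \<subseteq> S"
    proof
      fix x assume "x \<in> {x \<in> mcar X. p x \<in> p ` S}"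
      then obtain s where x: "x \<in> mcar X" and s: "s \<in> S" "p x = p s"
        by blast
      have sX: "s \<in> mcar X"
        using s(1) SX by blast
      have "p (madd X x (mneg X s)) = mzero B"
        using x sX s(2) by (simp add: rhom_diff[OF X B p] rhom_closed[OF p] right_module.add_neg[OF B])
      then have "madd X x (mneg X s) \<in> {x \<in> mcar X. p x \<in> D}"
        using x sX submod_zero[OF D(1)] by simp
      then have "madd X x (mneg X s) \<in> S"
        using S(2) by blast
      then have "madd X (madd X x (mneg X s)) s \<in> S"
        using s(1) submod_add[OF S(1)] by blast
      moreover have "madd X (madd X x (mneg X s)) s = x"
        using x sX by (simp add: X.add_assoc)
      ultimately show "x \<in> S"
        by simp
    qed
    have "submod R B (p ` S)"
      by (rule submod_image[OF X B p S(1)])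
    moreover have "D \<subset> p ` S"
    proof
      show "D \<subseteq> p ` S"
        using image_mono[OF psubset_imp_subset[OF S(2)], of p] img[OF sub(1)] by simp
      show "D \<noteq> p ` S"
      proof
        assume "D = p ` S"
        then have "S \<subseteq> {x \<in> mcar X. p x \<in> D}"
          using SX by blast
        then show False
          using S(2) by blast
      qed
    qed
    moreover have "p ` S \<subset> D'"
    proof
      show "p ` S \<subseteq> D'"
        using S(3) by blast
      show "p ` S \<noteq> D'"
      proof
        assume "p ` S = D'"
        then have "{x \<in> mcar X. p x \<in> D'} \<subseteq> S"
          using full by simp
        then show False
          using S(3) by blast
      qed
    qed
    ultimately show False
      using cov unfolding covers_def by blast
  qed
qed

lemma finite_length_ses:
  assumes ses: "ses R A X B i p" and fA: "finite_length R A" and fB: "finite_length R B"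
    and X: "right_module R X"
  shows "finite_length R X"
proof -
  note A = right_module_if_finite_length[OF fA] and B = right_module_if_finite_length[OF fB]
  note hi = sesD(1)[OF ses] and hp = sesD(2)[OF ses]
  obtain n C where C: "composition_series R A n C"
    using fA by (auto simp: finite_length_iff)
  obtain m D where D: "composition_series R B m D"
    using fB by (auto simp: finite_length_iff)
  text \<open>The image of the series of A, followed by the preimage of the series of B.\<close>
  define Z where "Z k = (if k \<le> n then i ` C k else {x \<in> mcar X. p x \<in> D (k - n)})" for k
  have Z_high: "Z k = {x \<in> mcar X. p x \<in> D (k - n)}" if "n \<le> k" for k
    using that C D sesD(5)[OF ses]
    by (cases "k = n") (auto simp: Z_def composition_series_def)
  have "composition_series R X (n + m) Z"
    unfolding composition_series_def
  proof (intro conjI allI impI)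
    show "Z 0 = {mzero X}"
      using C rhom_zero[OF A X hi] by (simp add: Z_def composition_series_def)
    show "Z (n + m) = mcar X"
      using D Z_high[of "n + m"] rhom_closed[OF hp] by (auto simp: composition_series_def)
    show "submod R X (Z k)" if "k \<le> n + m" for k
    proof (cases "k \<le> n")
      case True
      then show ?thesis
        using C submod_image[OF A X hi] by (simp add: Z_def composition_series_def)
    next
      case False
      then show ?thesis
        using that D Z_high[of k] submod_preimage[OF X B hp] by (simp add: composition_series_def)
    qed
    show "covers R X (Z k) (Z (Suc k))" if "k < n + m" for k
    proof (cases "k < n")
      case True
      then show ?thesis
        using C covers_image[OF A X hi sesD(3)[OF ses]]
        by (simp add: Z_def composition_series_def)
    next
      case False
      then have "Z k = {x \<in> mcar X. p x \<in> D (k - n)}"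
        "Z (Suc k) = {x \<in> mcar X. p x \<in> D (Suc (k - n))}"
        by (simp_all add: Z_high Suc_diff_le)
      then show ?thesis
        using that False D covers_preimage[OF X B hp sesD(4)[OF ses]]
        by (simp add: composition_series_def)
    qed
  qed
  then show ?thesis
    using X by (auto simp: finite_length_iff right_module_def)
qed

lemma pushout_extension:
  fixes T :: "('t, 'r) rmod" and M :: "('m, 'r) rmod"
  assumes fT: "finite_length R T" and fM: "finite_length R M"
    and T2: "right_module R T2" and F: "right_module R F"
    and ses: "ses R T2 F M j q" and \<pi>: "rhom R T2 T \<pi>"
  obtains X :: "('t \<times> 'm, 'r) rmod" and jX qX \<psi>
  where "finite_length R X" "ses R T X M jX qX" "rhom R F X \<psi>"
    "\<And>b. b \<in> mcar T2 \<Longrightarrow> \<psi> (j b) = jX (\<pi> b)" "\<And>f. f \<in> mcar F \<Longrightarrow> qX (\<psi> f) = q f"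
proof -
  interpret pushout_data R T T2 F M j q \<pi>
    using right_module_if_finite_length[OF fT] T2 F right_module_if_finite_length[OF fM] ses \<pi>
    by (simp add: pushout_data_def pushout_data_axioms_def)
  show thesis
  proof (rule that[of Push.Q "\<lambda>t. (t, mzero M)" snd "\<lambda>f. push (mzero T, f)"])
    show "finite_length R Push.Q"
      by (rule finite_length_ses[OF ses_pushout fT fM Push.right_module_quotient])
  qed (simp_all add: ses_pushout rhom_push_right push_j snd_push)
qed

section \<open>Universal add(T)-extensions\<close>

lemma universal_add_extD:
  fixes T :: "('t, 'r) rmod" and M :: "('m, 'r) rmod"
  assumes "universal_add_ext R T M T' E i p"
  shows "in_add R T T'" "ses R T' E M i p"
    and "\<And>(X :: ('t \<times> 'm, 'r) rmod) j q. finite_length R X \<Longrightarrow> ses R T X M j q \<Longrightarrow>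
      \<exists>\<phi> g. rhom R T' T \<phi> \<and> rhom R E X g \<and>
        (\<forall>t\<in>mcar T'. g (i t) = j (\<phi> t)) \<and> (\<forall>e\<in>mcar E. q (g e) = p e)"
  using assms unfolding universal_add_ext_def by blast+

lemma universal_add_ext_homs_extend:
  fixes T :: "('t, 'r) rmod" and M :: "('m, 'r) rmod"
  assumes univ: "universal_add_ext R T M T1 E i p"
    and fT: "finite_length R T" and fM: "finite_length R M"
    and T2: "right_module R T2" and F: "right_module R F" and E: "right_module R E"
    and ses: "ses R T2 F M j q"
  shows "homs_extend R (\<lambda>b. (mzero E, j b)) T2 (pullback_mod E F p q) T"
  unfolding homs_extend_def
proof (intro allI impI)
  fix \<pi> assume \<pi>: "rhom R T2 T \<pi>"
  note T = right_module_if_finite_length[OF fT] and M = right_module_if_finite_length[OF fM]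
  note p = sesD(2)[OF universal_add_extD(2)[OF univ]]
  let ?P = "pullback_mod E F p q"
  have P: "right_module R ?P"
    by (rule right_module_pullback_mod[OF E F M p sesD(2)[OF ses]])
  obtain X :: "('t \<times> 'm, 'r) rmod" and jX qX \<psi> where X: "finite_length R X" and sesX: "ses R T X M jX qX"
    and \<psi>: "rhom R F X \<psi>" "\<And>b. b \<in> mcar T2 \<Longrightarrow> \<psi> (j b) = jX (\<pi> b)"
    "\<And>f. f \<in> mcar F \<Longrightarrow> qX (\<psi> f) = q f"
    using pushout_extension[OF fT fM T2 F ses \<pi>] by blast
  note Xm = right_module_if_finite_length[OF X]
  obtain g where g: "rhom R E X g" "\<And>e. e \<in> mcar E \<Longrightarrow> qX (g e) = p e"
    using universal_add_extD(3)[OF univ X sesX] by blast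
  have fst: "rhom R ?P E fst" and snd: "rhom R ?P F snd"
    by (simp_all add: rhom_def)
  define w where "w u = madd X (\<psi> (snd u)) (mneg X (g (fst u)))" for u
  have w: "rhom R ?P X w"
    unfolding w_def by (rule rhom_diff_of_homs[OF Xm rhom_comp[OF snd \<psi>(1)] rhom_comp[OF fst g(1)]])
  have qw: "qX (w u) = mzero M" if "u \<in> mcar ?P" for u
    using that by (simp add: w_def rhom_diff[OF Xm M sesD(2)[OF sesX]] rhom_closed[OF \<psi>(1)]
        rhom_closed[OF g(1)] \<psi>(3) g(2) right_module.add_neg[OF M] rhom_closed[OF sesD(2)[OF ses]])
  let ?r = "\<lambda>u. inv_into (mcar T) jX (w u)"
  have r: "rhom R ?P T ?r" and jr: "\<And>u. u \<in> mcar ?P \<Longrightarrow> jX (?r u) = w u"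
    using ses_lift_to_kernel[OF sesX T P w qw] by blast+
  have "?r (mzero E, j b) = \<pi> b" if b: "b \<in> mcar T2" for b
  proof -
    have \<kappa>b: "(mzero E, j b) \<in> mcar ?P"
      using b rhom_closed[OF sesD(1)[OF ses]] ses_comp_zero[OF ses] rhom_zero[OF E M p]
      by (simp add: right_module.zero_closed[OF E])
    have "jX (?r (mzero E, j b)) = jX (\<pi> b)"
      using jr[OF \<kappa>b] b by (simp add: w_def \<psi>(2) rhom_zero[OF E Xm g(1)] rhom_closed[OF sesD(1)[OF sesX]]
          rhom_closed[OF \<pi>] right_module.add_zero[OF Xm] right_module.neg_zero[OF Xm])
    then show ?thesis
      using sesD(3)[OF sesX] rhom_closed[OF r \<kappa>b] rhom_closed[OF \<pi> b] by (auto dest: inj_onD)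
  qed
  with r show "\<exists>\<rho>. rhom R ?P T \<rho> \<and> (\<forall>b\<in>mcar T2. \<rho> (mzero E, j b) = \<pi> b)"
    by blast
qed

lemma retraction_ext_map:
  assumes E: "right_module R E" and F: "right_module R F" and M: "right_module R M"
    and T2: "right_module R T2" and ses: "ses R T2 F M j q"
    and p: "rhom R E M p"
    and \<rho>: "rhom R (pullback_mod E F p q) T2 \<rho>" "\<And>b. b \<in> mcar T2 \<Longrightarrow> \<rho> (mzero E, j b) = b"
  shows "\<exists>f. rhom R E F f \<and> (\<forall>e\<in>mcar E. q (f e) = p e)"
proof -
  let ?P = "pullback_mod E F p q"
  note j = sesD(1)[OF ses] and q = sesD(2)[OF ses]
  have P: "right_module R ?P"
    by (rule right_module_pullback_mod[OF E F M p q])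
  have fst: "rhom R ?P E fst" and snd: "rhom R ?P F snd"
    by (simp_all add: rhom_def)
  define h where "h u = madd F (snd u) (mneg F (j (\<rho> u)))" for u
  have h: "rhom R ?P F h"
    unfolding h_def by (rule rhom_diff_of_homs[OF F snd rhom_comp[OF \<rho>(1) j]])
  have surj: "fst ` mcar ?P = mcar E"
  proof
    show "mcar E \<subseteq> fst ` mcar ?P"
    proof
      fix e assume e: "e \<in> mcar E"
      then obtain f where "f \<in> mcar F" "q f = p e"
        using sesD(4)[OF ses] rhom_closed[OF p] by (metis imageE)
      then show "e \<in> fst ` mcar ?P"
        using e by (intro image_eqI[of _ _ "(e, f)"]) simp_all
    qed
  qed auto
  have ker: "h u = mzero F" if u: "u \<in> mcar ?P" "fst u = mzero E" for u
  proof -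
    obtain b where b: "b \<in> mcar T2" "snd u = j b"
      using u ses_kernel_iff[OF ses, of "snd u"] rhom_zero[OF E M p] by auto
    then have "u = (mzero E, j b)"
      using u(2) by (simp add: prod_eq_iff)
    then show ?thesis
      using b \<rho>(2) by (simp add: h_def rhom_closed[OF j] right_module.add_neg[OF F])
  qed
  have "\<exists>f. rhom R E F f \<and> (\<forall>u\<in>mcar ?P. f (fst u) = h u)"
    by (rule rhom_factor_through_surj[OF P E F fst surj h]) (rule ker)
  then obtain f where f: "rhom R E F f" "\<forall>u\<in>mcar ?P. f (fst u) = h u"
    by (elim exE conjE)
  have "q (f (fst u)) = p (fst u)" if u: "u \<in> mcar ?P" for u
    using f(2) u rhom_closed[OF \<rho>(1) u]
    by (simp add: h_def rhom_diff[OF F M q] rhom_closed[OF j] rhom_closed[OF q] ses_comp_zero[OF ses]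
        right_module.add_zero[OF M] right_module.neg_zero[OF M])
  then have "\<forall>e\<in>mcar E. q (f e) = p e"
    unfolding surj[symmetric] by blast
  with f(1) show ?thesis
    by (intro exI[of _ f] conjI)
qed

lemma universal_add_ext_map:
  fixes T :: "('t, 'r) rmod" and M :: "('m, 'r) rmod"
  assumes univ: "universal_add_ext R T M T1 E i p"
    and fT: "finite_length R T" and fM: "finite_length R M"
    and T2: "right_module R T2" and F: "right_module R F" and E: "right_module R E"
    and ses: "ses R T2 F M j q" and add: "in_add R T T2"
  shows "\<exists>f. rhom R E F f \<and> (\<forall>e\<in>mcar E. q (f e) = p e)"
proof -
  have "homs_extend R (\<lambda>b. (mzero E, j b)) T2 (pullback_mod E F p q) T2"
    by (rule homs_extend_in_add[OF right_module_if_finite_length[OF fT]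
          universal_add_ext_homs_extend[OF univ fT fM T2 F E ses] add])
  moreover have "rhom R T2 T2 (\<lambda>b. b)"
    by (simp add: rhom_def)
  ultimately obtain \<rho> where \<rho>: "rhom R (pullback_mod E F p q) T2 \<rho>"
    "\<forall>b\<in>mcar T2. \<rho> (mzero E, j b) = b"
    unfolding homs_extend_def by blast
  show ?thesis
    by (rule retraction_ext_map[OF E F right_module_if_finite_length[OF fM] T2 ses
          sesD(2)[OF universal_add_extD(2)[OF univ]] \<rho>(1) \<rho>(2)[rule_format]])
qed

lemma endomorphism_over_base_factors_add:
  assumes E: "right_module R E" and M: "right_module R M" and T1: "right_module R T1"
    and ses: "ses R T1 E M i p" and add: "in_add R T T1"
    and h: "rhom R E E h" and ph: "\<And>x. x \<in> mcar E \<Longrightarrow> p (h x) = p x"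
  shows "factors_add R T E E (\<lambda>x. madd E (h x) (mneg E x))"
proof -
  let ?d = "\<lambda>x. madd E (h x) (mneg E x)"
  have d: "rhom R E E ?d"
    by (rule rhom_diff_of_homs[OF E h]) (simp add: rhom_def)
  have "p (?d x) = mzero M" if "x \<in> mcar E" for x
    using that by (simp add: rhom_diff[OF E M sesD(2)[OF ses]] rhom_closed[OF h] ph
        right_module.add_neg[OF M] rhom_closed[OF sesD(2)[OF ses]])
  then have \<delta>: "rhom R E T1 (\<lambda>x. inv_into (mcar T1) i (?d x))"
    and i\<delta>: "\<And>x. x \<in> mcar E \<Longrightarrow> i (inv_into (mcar T1) i (?d x)) = ?d x"
    using ses_lift_to_kernel[OF ses T1 E d] by blast+
  obtain Y \<alpha> \<beta> where Y: "is_add_model R T Y" and \<alpha>: "rhom R T1 Y \<alpha>" and \<beta>: "rhom R Y T1 \<beta>"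
    and \<beta>\<alpha>: "\<And>x. x \<in> mcar T1 \<Longrightarrow> \<beta> (\<alpha> x) = x"
    using add unfolding in_add_def riso_def by blast
  have "\<forall>x\<in>mcar E. ?d x = i (\<beta> (\<alpha> (inv_into (mcar T1) i (?d x))))"
    using \<beta>\<alpha> i\<delta> rhom_closed[OF \<delta>] by simp
  then show ?thesis
    unfolding factors_add_def using Y rhom_comp[OF \<delta> \<alpha>] rhom_comp[OF \<beta> sesD(1)[OF ses]] by blast
qed

theorem corollary1p3:
  fixes R :: "'r ring"
    and T :: "('t, 'r) rmod" and M :: "('m, 'r) rmod"
    and T1 :: "('a, 'r) rmod" and E :: "('e, 'r) rmod"
    and i :: "'a \<Rightarrow> 'e" and p :: "'e \<Rightarrow> 'm"
    and T2 :: "('b, 'r) rmod" and F :: "('f, 'r) rmod"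
    and j :: "'b \<Rightarrow> 'f" and q :: "'f \<Rightarrow> 'm"
  assumes "ring R"
    and "finite_length R T" and "finite_length R M"
    and "finite_length R T1" and "finite_length R E"
    and "finite_length R T2" and "finite_length R F"
    and "universal_add_ext R T M T1 E i p"
    and "universal_add_ext R T M T2 F j q"
  shows "iso_mod_add R T E F"
proof -
  note modules = assms(3-7)[THEN right_module_if_finite_length]
  note sesE = universal_add_extD(2)[OF assms(8)] and sesF = universal_add_extD(2)[OF assms(9)]
  obtain f where f: "rhom R E F f" "\<forall>e\<in>mcar E. q (f e) = p e"
    using universal_add_ext_map[OF assms(8,2,3) modules(4,5,3) sesF universal_add_extD(1)[OF assms(9)]]
    by blast
  obtain g where g: "rhom R F E g" "\<forall>e\<in>mcar F. p (g e) = q e"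
    using universal_add_ext_map[OF assms(9,2,3) modules(2,3,5) sesE universal_add_extD(1)[OF assms(8)]]
    by blast
  have "factors_add R T E E (\<lambda>x. madd E (g (f x)) (mneg E x))"
    using f g rhom_closed[OF f(1)]
    by (intro endomorphism_over_base_factors_add[OF modules(3,1,2) sesE universal_add_extD(1)[OF assms(8)]
          rhom_comp[OF f(1) g(1)]]) simp
  moreover have "factors_add R T F F (\<lambda>y. madd F (f (g y)) (mneg F y))"
    using f g rhom_closed[OF g(1)]
    by (intro endomorphism_over_base_factors_add[OF modules(5,1,4) sesF universal_add_extD(1)[OF assms(9)]
          rhom_comp[OF g(1) f(1)]]) simp
  ultimately show ?thesis
    unfolding iso_mod_add_def using f(1) g(1) by blast
qed

end
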